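(* The average running time $\mathbb{T}(n,p)$ of exhaustive search for maximum independent set on a random graph $G\sim\mathcal{G}(n,p)$ of order $n$ is: (1) subexponential in $n$ when $p$ is a fixed constant, or when $p=\phi(n)/n$ for some function $\phi$ with $\phi(n)=o(n)$ and $\phi(n)\to\infty$ as $n\to\infty$; (2) exponential in $n$ when $p=k/n$ for a fixed constant $k>0$.
   Context: $\mathcal{G}(n,p)$ is the binomial random graph on $n$ vertices in which each of the $\binom{n}{2}$ pairs of vertices is an edge with probability $p$, independently. Exhaustive search processes the vertices in a fixed order $v_1,\dots,v_n$ and builds a binary search tree: a node at level $i$ corresponds to a subset $P\subseteq\{v_1,\dots,v_i\}$, and it has the two children $P\cup\{v_{i+1}\}$ and $P$ at level $i+1$; a node is kept (and expanded) only if its subset is an independent set of $G$. $\mathbb{T}(n,p)$ denotes the expected number of nodes of this search tree when $G\sim\mathcal{G}(n,p)$. *)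

theory Defs
  imports "HOL-Probability.Probability"
begin

text \<open>Vertices v_1..v_n are represented by 0..n-1. A graph on these vertices is
  a function from the unordered pairs (u,v) with u < v < n to bool (edge or not);
  outside these pairs it is False.\<close>

definition vertex_pairs :: "nat \<Rightarrow> (nat \<times> nat) set" where
  "vertex_pairs n = {(u, v). u < v \<and> v < n}"

definition gnp :: "nat \<Rightarrow> real \<Rightarrow> (nat \<times> nat \<Rightarrow> bool) pmf" where
  "gnp n p = Pi_pmf (vertex_pairs n) False (\<lambda>_. bernoulli_pmf p)"

definition indep_set :: "(nat \<times> nat \<Rightarrow> bool) \<Rightarrow> nat set \<Rightarrow> bool" where
  "indep_set G P \<longleftrightarrow> (\<forall>u\<in>P. \<forall>v\<in>P. u < v \<longrightarrow> \<not> G (u, v))"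

text \<open>Nodes of the exhaustive search tree: a node at level i (0 \<le> i \<le> n) is a subset
  P of {v_1,...,v_i} (= {0..<i}) which is independent in G.\<close>
definition search_tree_nodes :: "nat \<Rightarrow> (nat \<times> nat \<Rightarrow> bool) \<Rightarrow> (nat \<times> nat set) set" where
  "search_tree_nodes n G = {(i, P). i \<le> n \<and> P \<subseteq> {0..<i} \<and> indep_set G P}"

definition T :: "nat \<Rightarrow> real \<Rightarrow> real" where
  "T n p = measure_pmf.expectation (gnp n p) (\<lambda>G. real (card (search_tree_nodes n G)))"

definition subexponential :: "(nat \<Rightarrow> real) \<Rightarrow> bool" where
  "subexponential f \<longleftrightarrow> (\<forall>\<epsilon>>0. eventually (\<lambda>n. f n \<le> exp (\<epsilon> * real n)) sequentially)"

definition exponential :: "(nat \<Rightarrow> real) \<Rightarrow> bool" where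
  "exponential f \<longleftrightarrow> (\<exists>c>1. eventually (\<lambda>n. f n \<ge> c ^ n) sequentially)"

end

theory Submission
  imports Defs "HOL-Real_Asymp.Real_Asymp"
begin

text \<open>A set of \<open>j\<close> vertices is independent in \<open>G(n,p)\<close> with probability
  \<open>(1-p)^(j choose 2)\<close>, so by linearity of expectation \<open>T(n,p)\<close> is the sum of these
  probabilities over all subsets of \<open>{0..<i}\<close>, \<open>i \<le> n\<close>.
  Completing the square in \<open>j\<close> gives \<open>(1-p)^(j choose 2) \<le> x^j exp((1 - ln x)\<^sup>2/(2p))\<close>
  for every \<open>0 < x \<le> 1\<close>, hence \<open>T(n,p) \<le> (n+1) (1+x)^n exp((1 - ln x)\<^sup>2/(2p))\<close>. When the
  expected degree \<open>np\<close> tends to infinity the last factor is \<open>e^o(n)\<close>, and \<open>x\<close> may be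
  taken arbitrarily small, so \<open>T\<close> is subexponential.
  Conversely, the subsets of \<open>{0..<m}\<close> alone give \<open>T(n,p) \<ge> (2 (1-p)^m)^m\<close>. For
  \<open>p = k/n\<close> and \<open>m = n div d\<close> with \<open>d\<close> a large multiple of \<open>k\<close>, \<open>(1-p)^m \<ge> 1/\<surd>2\<close>, so
  \<open>T(n,p) \<ge> \<surd>2^m\<close> is exponential in \<open>n\<close>.\<close>

lemma prob_Pi_pmf_bernoulli_all_False:
  assumes "finite A" "S \<subseteq> A" "0 \<le> p" "p \<le> 1"
  shows "measure_pmf.prob (Pi_pmf A d (\<lambda>_. bernoulli_pmf p)) {f. \<forall>x\<in>S. \<not> f x} = (1 - p) ^ card S"
proof -
  define B where "B x = (if x \<in> S then {False} else UNIV)" for x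
  have "{f. \<forall>x\<in>S. \<not> f x} = Pi A B"
    using \<open>S \<subseteq> A\<close> by (auto simp: B_def Pi_def)
  then have "measure_pmf.prob (Pi_pmf A d (\<lambda>_. bernoulli_pmf p)) {f. \<forall>x\<in>S. \<not> f x}
      = (\<Prod>x\<in>A. measure_pmf.prob (bernoulli_pmf p) (B x))"
    using \<open>finite A\<close> by (simp add: measure_Pi_pmf_Pi)
  also have "\<dots> = (\<Prod>x\<in>A. if x \<in> S then 1 - p else 1)"
    using assms by (intro prod.cong) (auto simp: B_def measure_pmf_single)
  also have "\<dots> = (1 - p) ^ card S"
    using assms by (simp add: prod.If_cases Int_absorb1)
  finally show ?thesis .
qed

definition pairs_within :: "nat set \<Rightarrow> (nat \<times> nat) set" where
  "pairs_within P = {(u, v). u \<in> P \<and> v \<in> P \<and> u < v}"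

lemma card_pairs_within:
  assumes "finite P"
  shows "card (pairs_within P) = card P choose 2"
  using assms
proof (induction P rule: finite_linorder_max_induct)
  case empty
  then show ?case by (simp add: pairs_within_def)
next
  case (insert b A)
  have "pairs_within (insert b A) = pairs_within A \<union> (\<lambda>u. (u, b)) ` A"
    using insert.hyps(2) by (auto simp: pairs_within_def)
  moreover have "pairs_within A \<subseteq> A \<times> A"
    by (auto simp: pairs_within_def)
  moreover have "pairs_within A \<inter> (\<lambda>u. (u, b)) ` A = {}"
    using insert.hyps(2) by (auto simp: pairs_within_def)
  ultimately have "card (pairs_within (insert b A)) = card (pairs_within A) + card A"
    using insert.hyps(1) by (simp add: card_Un_disjoint card_image inj_on_def finite_subset)
  moreover have "b \<notin> A"
    using insert.hyps(2) by blast
  ultimately show ?case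
    using insert by (simp add: numeral_2_eq_2)
qed

lemma prob_indep_set_gnp:
  assumes "0 \<le> p" "p \<le> 1" "P \<subseteq> {0..<n}"
  shows "measure_pmf.prob (gnp n p) {G. indep_set G P} = (1 - p) ^ (card P choose 2)"
proof -
  have "finite (vertex_pairs n)"
    by (rule finite_subset[of _ "{..<n} \<times> {..<n}"]) (auto simp: vertex_pairs_def)
  moreover have "pairs_within P \<subseteq> vertex_pairs n"
    using assms(3) by (auto simp: pairs_within_def vertex_pairs_def)
  moreover have "{G. indep_set G P} = {G. \<forall>e\<in>pairs_within P. \<not> G e}"
    by (auto simp: indep_set_def pairs_within_def)
  ultimately show ?thesis
    using assms finite_subset[OF assms(3)]
    by (simp add: gnp_def prob_Pi_pmf_bernoulli_all_False card_pairs_within)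
qed

lemma T_eq_sum:
  assumes "0 \<le> p" "p \<le> 1"
  shows "T n p = (\<Sum>i\<le>n. \<Sum>P\<in>Pow {0..<i}. (1 - p) ^ (card P choose 2))"
proof -
  define U where "U = Sigma {..n} (\<lambda>i. Pow {0..<i})"
  have "finite U"
    by (auto simp: U_def)
  have card_nodes: "real (card (search_tree_nodes n G)) = (\<Sum>x\<in>U. indicator {G. indep_set G (snd x)} G)"
    for G
  proof -
    have "search_tree_nodes n G = U \<inter> {x. indep_set G (snd x)}"
      by (auto simp: search_tree_nodes_def U_def)
    then show ?thesis
      using \<open>finite U\<close> by (simp add: indicator_def sum_of_bool_eq)
  qed
  have "T n p = (\<Sum>x\<in>U. measure_pmf.prob (gnp n p) {G. indep_set G (snd x)})"
    unfolding T_def card_nodes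
    by (subst Bochner_Integration.integral_sum)
       (auto intro!: measure_pmf.integrable_const_bound[where B=1])
  also have "\<dots> = (\<Sum>x\<in>U. (1 - p) ^ (card (snd x) choose 2))"
    using assms by (intro sum.cong) (force simp: U_def intro!: prob_indep_set_gnp)+
  also have "\<dots> = (\<Sum>i\<le>n. \<Sum>P\<in>Pow {0..<i}. (1 - p) ^ (card P choose 2))"
    unfolding U_def by (subst sum.Sigma) (auto simp: split_def)
  finally show ?thesis .
qed

lemma sum_Pow_power_card:
  fixes x :: "'a :: comm_semiring_1"
  assumes "finite A"
  shows "(\<Sum>P\<in>Pow A. x ^ card P) = (1 + x) ^ card A"
  using prod_add[OF assms, of "\<lambda>_. x" "\<lambda>_. 1"] by (simp add: add.commute)

lemma of_nat_choose_two: "real (j choose 2) = real j * (real j - 1) / 2"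
  by (induction j) (auto simp: numeral_2_eq_2 field_simps)

lemma one_minus_power_choose_two_le:
  fixes p x :: real
  assumes "0 < p" "p \<le> 1" "0 < x" "x \<le> 1"
  shows "(1 - p) ^ (j choose 2) \<le> x ^ j * exp ((1 - ln x)\<^sup>2 / (2 * p))"
proof -
  define c where "c = p/2 - ln x"
  have "ln x \<le> 0"
    using assms by simp
  then have "0 \<le> c" "c \<le> 1 - ln x"
    unfolding c_def using assms by linarith+
  then have "c\<^sup>2 / (2*p) \<le> (1 - ln x)\<^sup>2 / (2*p)"
    using assms by (intro divide_right_mono power_mono) auto
  moreover have "p * (j choose 2) + j * ln x + c\<^sup>2 / (2*p) = (p * j - c)\<^sup>2 / (2*p)"
    using assms by (simp add: c_def of_nat_choose_two field_simps power2_eq_square)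
  moreover have "0 \<le> (p * j - c)\<^sup>2 / (2*p)"
    using assms by simp
  ultimately have exponent: "- p * (j choose 2) \<le> j * ln x + (1 - ln x)\<^sup>2 / (2*p)"
    by linarith
  have "(1 - p) ^ (j choose 2) \<le> exp (-p) ^ (j choose 2)"
    using assms by (intro power_mono) (auto simp: exp_ge_add_one_self[of "-p", simplified])
  also have "\<dots> = exp (- p * (j choose 2))"
    by (simp add: exp_of_nat_mult[symmetric] mult.commute)
  also have "\<dots> \<le> exp (j * ln x + (1 - ln x)\<^sup>2 / (2*p))"
    using exponent by simp
  also have "\<dots> = x ^ j * exp ((1 - ln x)\<^sup>2 / (2 * p))"
    using assms by (simp add: exp_add exp_of_nat_mult)
  finally show ?thesis .
qed

lemma T_le:
  assumes "0 < p" "p \<le> 1" "0 < x" "x \<le> 1"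
  shows "T n p \<le> (real n + 1) * (1 + x) ^ n * exp ((1 - ln x)\<^sup>2 / (2 * p))"
proof -
  define K where "K = exp ((1 - ln x)\<^sup>2 / (2 * p))"
  have "T n p \<le> (\<Sum>i\<le>n. \<Sum>P\<in>Pow {0..<i}. x ^ card P * K)"
    unfolding T_eq_sum[OF less_imp_le[OF assms(1)] assms(2)] K_def
    using assms by (intro sum_mono one_minus_power_choose_two_le)
  also have "\<dots> = (\<Sum>i\<le>n. (1 + x) ^ i * K)"
    by (simp add: sum_distrib_right[symmetric] sum_Pow_power_card)
  also have "\<dots> \<le> (\<Sum>i\<le>n. (1 + x) ^ n * K)"
    using assms by (intro sum_mono mult_right_mono power_increasing) (auto simp: K_def)
  finally show ?thesis
    by (simp add: K_def algebra_simps)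
qed

lemma T_ge:
  assumes "0 \<le> p" "p \<le> 1" "m \<le> n"
  shows "(2 * (1 - p) ^ m) ^ m \<le> T n p"
proof -
  have "(2 * (1 - p) ^ m) ^ m = (\<Sum>P\<in>Pow {0..<m}. (1 - p) ^ (m * m))"
    by (simp add: card_Pow power_mult power_mult_distrib)
  also have "\<dots> \<le> (\<Sum>P\<in>Pow {0..<m}. (1 - p) ^ (card P choose 2))"
  proof (intro sum_mono power_decreasing)
    fix P assume "P \<in> Pow {0..<m}"
    then have "card P \<le> card {0..<m}"
      by (intro card_mono) auto
    then have "card P \<le> m"
      by simp
    have "card P choose 2 \<le> card P * card P"
      by (simp add: choose_two div_le_dividend order.trans[OF div_le_dividend])
    also have "\<dots> \<le> m * m"
      using \<open>card P \<le> m\<close> mult_le_mono by blast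
    finally show "card P choose 2 \<le> m * m" .
  qed (use assms in auto)
  also have "\<dots> \<le> (\<Sum>i\<le>n. \<Sum>P\<in>Pow {0..<i}. (1 - p) ^ (card P choose 2))"
    using assms by (intro member_le_sum) (auto intro!: sum_nonneg)
  also have "\<dots> = T n p"
    using assms by (simp add: T_eq_sum)
  finally show ?thesis .
qed

lemma subexponential_T_if_degree_diverges:
  fixes p :: "nat \<Rightarrow> real"
  assumes "eventually (\<lambda>n. 0 < p n \<and> p n \<le> 1) sequentially"
    and "filterlim (\<lambda>n. p n * real n) at_top sequentially"
  shows "subexponential (\<lambda>n. T n (p n))"
  unfolding subexponential_def
proof (intro allI impI)
  fix \<epsilon> :: real assume "\<epsilon> > 0"
  define x where "x = min 1 (\<epsilon>/3)"
  define C where "C = (1 - ln x)\<^sup>2 / 2"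
  have x: "0 < x" "x \<le> 1" "x \<le> \<epsilon>/3"
    using \<open>\<epsilon> > 0\<close> by (auto simp: x_def)
  have "eventually (\<lambda>n. 3 * C / \<epsilon> \<le> p n * real n) sequentially"
    using assms(2) by (simp add: filterlim_at_top)
  moreover have "eventually (\<lambda>n. real n + 1 \<le> exp (\<epsilon>/3 * real n)) sequentially"
    using \<open>\<epsilon> > 0\<close> by real_asymp
  ultimately show "eventually (\<lambda>n. T n (p n) \<le> exp (\<epsilon> * real n)) sequentially"
    using assms(1)
  proof eventually_elim
    case (elim n)
    have "(1 + x) ^ n \<le> exp x ^ n"
      using x by (intro power_mono) (auto simp: exp_ge_add_one_self add.commute)
    also have "\<dots> = exp (x * real n)"
      by (simp add: exp_of_nat_mult[symmetric] mult.commute)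
    also have "\<dots> \<le> exp (\<epsilon>/3 * real n)"
      using mult_right_mono[OF x(3), of "real n"] by simp
    finally have growth: "(1 + x) ^ n \<le> exp (\<epsilon>/3 * real n)" .
    have "C / p n \<le> \<epsilon>/3 * real n"
      using elim \<open>\<epsilon> > 0\<close> by (simp add: field_simps)
    then have "exp (C / p n) \<le> exp (\<epsilon>/3 * real n)"
      by simp
    have "T n (p n) \<le> (real n + 1) * (1 + x) ^ n * exp (C / p n)"
      using T_le[of "p n" x n] x elim by (simp add: C_def)
    also have "\<dots> \<le> exp (\<epsilon>/3 * real n) * exp (\<epsilon>/3 * real n) * exp (\<epsilon>/3 * real n)"
      using elim growth \<open>exp (C / p n) \<le> exp (\<epsilon>/3 * real n)\<close> x
      by (intro mult_mono) auto
    finally have "T n (p n) \<le> exp (\<epsilon>/3 * real n) * exp (\<epsilon>/3 * real n) * exp (\<epsilon>/3 * real n)" .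
    then show ?case
      by (simp add: exp_add[symmetric])
  qed
qed

lemma exp_neg_two_le_one_minus:
  fixes p :: real
  assumes "0 \<le> p" "p \<le> 1/2"
  shows "exp (-2 * p) \<le> 1 - p"
proof -
  have "-2 * p \<le> - p - 2 * p\<^sup>2"
    using mult_left_mono[of "2*p" 1 p] assms by (simp add: power2_eq_square algebra_simps)
  also have "\<dots> \<le> ln (1 - p)"
    using ln_one_minus_pos_lower_bound[of p] assms by simp
  finally show ?thesis
    using assms by (simp add: ln_ge_iff)
qed

lemma le_two_mult_div:
  fixes n d :: nat
  assumes "1 \<le> d" "d \<le> n"
  shows "n \<le> 2 * d * (n div d)"
proof -
  have "d \<le> d * (n div d)"
    using assms by (simp add: div_greater_zero_iff Suc_le_eq)
  then have "n mod d \<le> d * (n div d)"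
    using mod_less_divisor[of d n] assms by linarith
  moreover have "n = d * (n div d) + n mod d"
    by simp
  ultimately have "n \<le> 2 * (d * (n div d))"
    by linarith
  then show ?thesis
    by (simp add: mult.assoc)
qed

lemma sqrt_two_le_two_mult_one_minus_power:
  fixes p :: real
  assumes "0 \<le> p" "p \<le> 1/2" "4 * p * m \<le> ln 2"
  shows "sqrt 2 \<le> 2 * (1 - p) ^ m"
proof -
  have "2 * exp (- (ln 2 / 2)) = exp (ln 2 + - (ln (2::real) / 2))"
    unfolding exp_add by simp
  then have "sqrt 2 = 2 * exp (- (ln 2 / 2))"
    by (simp add: powr_half_sqrt[symmetric] powr_def)
  also have "\<dots> \<le> 2 * exp (-2 * p) ^ m"
    using assms(3) by (simp add: exp_of_nat_mult[symmetric] algebra_simps)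
  also have "\<dots> \<le> 2 * (1 - p) ^ m"
    using assms exp_neg_two_le_one_minus[of p] by (intro mult_left_mono power_mono) auto
  finally show ?thesis .
qed

lemma exponential_T_const_degree:
  fixes k :: real
  assumes "k > 0"
  shows "exponential (\<lambda>n. T n (k / real n))"
  unfolding exponential_def
proof (intro exI conjI)
  define d :: nat where "d = nat \<lceil>4 * k / ln 2\<rceil> + 1"
  have "d \<ge> 1"
    by (simp add: d_def)
  have "4 * k / ln 2 \<le> real d"
    unfolding d_def by linarith
  then have "4 * k \<le> real d * ln 2"
    by (simp add: field_simps)
  show "2 powr (1 / (4 * real d)) > 1"
    using \<open>d \<ge> 1\<close> by simp
  have "eventually (\<lambda>n. 2 * k \<le> real n) sequentially"
    using filterlim_real_sequentially by (simp add: filterlim_at_top)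
  then have "eventually (\<lambda>n. 2 * k \<le> real n \<and> d \<le> n) sequentially"
    using eventually_ge_at_top[of d] by (rule eventually_conj)
  then show "eventually (\<lambda>n. (2 powr (1 / (4 * real d))) ^ n \<le> T n (k / real n)) sequentially"
  proof (rule eventually_mono)
    fix n assume n: "2 * k \<le> real n \<and> d \<le> n"
    define p where "p = k / real n"
    define m where "m = n div d"
    have "real n > 0"
      using n \<open>k > 0\<close> by linarith
    have p: "0 < p" "p \<le> 1/2"
      using n \<open>k > 0\<close> \<open>real n > 0\<close> by (simp_all add: p_def divide_le_eq)
    have "d * m \<le> n"
      by (simp add: m_def)
    then have "real m / real n \<le> 1 / real d"
      using \<open>real n > 0\<close> \<open>d \<ge> 1\<close> by (simp add: divide_le_eq le_divide_eq mult.commute flip: of_nat_mult)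
    have "real n \<le> 2 * real d * real m"
      using le_two_mult_div[of d n] n \<open>d \<ge> 1\<close> unfolding m_def
      by (metis of_nat_le_iff of_nat_mult of_nat_numeral)
    have "4 * p * m = 4 * k * (real m / real n)"
      by (simp add: p_def)
    also have "\<dots> \<le> 4 * k * (1 / real d)"
      using \<open>real m / real n \<le> 1 / real d\<close> \<open>k > 0\<close> by (intro mult_left_mono) auto
    also have "\<dots> \<le> ln 2"
      using \<open>4 * k \<le> real d * ln 2\<close> \<open>d \<ge> 1\<close> by (simp add: divide_le_eq mult.commute)
    finally have "sqrt 2 \<le> 2 * (1 - p) ^ m"
      using p by (intro sqrt_two_le_two_mult_one_minus_power) auto
    have "(2 powr (1 / (4 * real d))) ^ n = 2 powr (real n / (4 * real d))"
      by (simp add: powr_realpow[symmetric] powr_powr)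
    also have "\<dots> \<le> 2 powr (real m / 2)"
      using \<open>real n \<le> 2 * real d * real m\<close> \<open>d \<ge> 1\<close> by (intro powr_mono) (auto simp: divide_le_eq algebra_simps)
    also have "\<dots> = sqrt 2 ^ m"
      by (simp add: powr_half_sqrt[symmetric] powr_realpow[symmetric] powr_powr)
    also have "\<dots> \<le> (2 * (1 - p) ^ m) ^ m"
      using \<open>sqrt 2 \<le> 2 * (1 - p) ^ m\<close> by (intro power_mono) auto
    also have "\<dots> \<le> T n p"
      using p by (intro T_ge) (auto simp: m_def)
    finally show "(2 powr (1 / (4 * real d))) ^ n \<le> T n (k / real n)"
      by (simp add: p_def)
  qed
qed

lemma subexponential_T_const_prob:
  assumes "0 < p" "p \<le> 1"
  shows "subexponential (\<lambda>n. T n p)"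
proof (rule subexponential_T_if_degree_diverges)
  show "eventually (\<lambda>n. 0 < p \<and> p \<le> 1) sequentially"
    using assms by simp
  show "filterlim (\<lambda>n. p * real n) at_top sequentially"
    using assms by (intro filterlim_tendsto_pos_mult_at_top[OF tendsto_const _ filterlim_real_sequentially])
qed

lemma subexponential_T_sublinear_degree:
  fixes \<phi> :: "nat \<Rightarrow> real"
  assumes "\<phi> \<in> o(\<lambda>n. real n)" "filterlim \<phi> at_top sequentially"
  shows "subexponential (\<lambda>n. T n (\<phi> n / real n))"
proof (rule subexponential_T_if_degree_diverges)
  have "eventually (\<lambda>n. norm (\<phi> n) \<le> 1 * norm (real n)) sequentially"
    using assms(1) by (intro landau_o.smallD) auto
  moreover have "eventually (\<lambda>n. 1 \<le> \<phi> n) sequentially"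
    using assms(2) by (simp add: filterlim_at_top)
  ultimately show "eventually (\<lambda>n. 0 < \<phi> n / real n \<and> \<phi> n / real n \<le> 1) sequentially"
    by eventually_elim (auto simp: field_simps)
  have "eventually (\<lambda>n. \<phi> n = \<phi> n / real n * real n) sequentially"
    by (rule eventually_sequentiallyI[of 1]) auto
  then show "filterlim (\<lambda>n. \<phi> n / real n * real n) at_top sequentially"
    by (rule filterlim_cong[OF refl refl, THEN iffD1]) (rule assms(2))
qed

theorem theorem1:
  shows "(\<forall>p::real. 0 < p \<and> p \<le> 1 \<longrightarrow> subexponential (\<lambda>n. T n p))
    \<and> (\<forall>\<phi>::nat \<Rightarrow> real. \<phi> \<in> o(\<lambda>n. real n) \<and> filterlim \<phi> at_top sequentially
          \<longrightarrow> subexponential (\<lambda>n. T n (\<phi> n / real n)))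
    \<and> (\<forall>k::real. k > 0 \<longrightarrow> exponential (\<lambda>n. T n (k / real n)))"
  using subexponential_T_const_prob subexponential_T_sublinear_degree exponential_T_const_degree
  by blast

end
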